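(* Let $X,Y\in\Sigma^*$, $k\ge0$ and $\ell\ge1$ integers, $\mathcal{S}(\ell)$ an $\ell$-cover, $\mathcal{F}$ the set of all strings occurring as a component of a pair in $\mathsf{Pairs}_\ell(X)\cup\mathsf{Pairs}_\ell(Y)$, and $(N(F))_{F\in\mathcal{F}}$ a $k$-complete family. For $S\in\{X,Y\}$ and a half-integer $0\le k'\le k$ define $$\mathsf{Pairs}^{(k,k')}_\ell(S)=\bigcup_{(U_1,U_2)\in\mathsf{Pairs}_\ell(S)}\{(U_1',U_2'): U_i'\in N_{d_i,d_i'}(U_i),\ d_1+d_2=k,\ d_1'+d_2'=k'\},$$ where $d_1,d_2$ range over nonnegative integers and $d_i'$ over half-integers with $0\le d_i'\le d_i$. If $\mathsf{LCF}_k(X,Y)\ge\ell$, then $$\mathsf{LCF}_k(X,Y)=\max_{k_1+k_2=k}\mathrm{maxPairLCP}(\mathsf{Pairs}^{(k,k_1)}_\ell(X),\mathsf{Pairs}^{(k,k_2)}_\ell(Y)),$$ where $k_1,k_2$ range over half-integers in $[0,k]$.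
   Context: $U[i..j]$ is a factor, $U^R$ the reversal, $d_H$ the Hamming distance, $\mathsf{LCP}$ the longest common prefix length, $\mathsf{LCP}_d(U,V)=\max\{p\le\min(|U|,|V|): d_H(U[1..p],V[1..p])\le d\}$, $\#_\$(W)$ the number of $\$$'s in $W$, and half-integers are elements of $\tfrac12\mathbb{Z}$. $\mathsf{LCF}_k(X,Y)$ is the maximum length of a factor of $X$ and a factor of $Y$ of equal length at Hamming distance at most $k$. A $d$-cover is a set $\mathcal{S}(d)\subseteq\mathbb{Z}_+$ with a function $h$, $0\le h(i,j)<d$, such that $i+h(i,j),j+h(i,j)\in\mathcal{S}(d)$ for all $i,j\in\mathbb{Z}_+$; $\mathsf{Pairs}_\ell(U)=\{((U[1..i-1])^R,U[i..|U|]): i\in\mathcal{S}(\ell)\cap[1..|U|]\}$. $\mathrm{maxPairLCP}(\mathcal{P},\mathcal{Q})=\max\{\mathsf{LCP}(P_1,Q_1)+\mathsf{LCP}(P_2,Q_2):(P_1,P_2)\in\mathcal{P},(Q_1,Q_2)\in\mathcal{Q}\}$. With $\$\notin\Sigma$, $\Sigma_\$=\Sigma\cup\{\$\}$: $U',V'\in\Sigma_\$^*$ form a $(U,V)_d$-pair if $|U'|=|U|$, $|V'|=|V|$, and for each $i$: if $i>\mathsf{LCP}_d(U,V)$ or $U[i]=V[i]$ then $U'[i]=U[i]$, $V'[i]=V[i]$; otherwise $U'[i]=V'[i]\in\{U[i],V[i],\$\}$. Sets $N(F)\subseteq\Sigma_\$^*$ form a $k$-complete family if for all $U,V\in\mathcal{F}$,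 $0\le d\le k$, some $(U,V)_d$-pair $(U',V')$ has $U'\in N(U)$, $V'\in N(V)$. $N_d(F)=\{F'\in N(F):|F'|=|F|,\ d_H(F,F')\le d\}$ and $N_{d,d'}(F)=\{F'\in N_d(F): d_H(F,F')-\tfrac12\#_\$(F')\le d'\}$. *)

theory Defs
  imports Complex_Main
begin

text \<open>Strings are lists; positions of the paper (1-based) correspond to list indices
  shifted by one.  The extended alphabet Sigma plus dollar is modelled by \<open>'a option\<close>,
  with \<open>None\<close> playing the role of the fresh symbol dollar and \<open>Some c\<close> the letter c.\<close>

definition hamming :: "'b list \<Rightarrow> 'b list \<Rightarrow> nat" where
  "hamming U V = card {i. i < length U \<and> i < length V \<and> U ! i \<noteq> V ! i}"

fun lcp :: "'b list \<Rightarrow> 'b list \<Rightarrow> nat" where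
  "lcp (x # xs) (y # ys) = (if x = y then Suc (lcp xs ys) else 0)"
| "lcp _ _ = 0"

definition lcp_d :: "nat \<Rightarrow> 'b list \<Rightarrow> 'b list \<Rightarrow> nat" where
  "lcp_d d U V = Max {p. p \<le> min (length U) (length V) \<and>
                          hamming (take p U) (take p V) \<le> d}"

definition LCF :: "nat \<Rightarrow> 'a list \<Rightarrow> 'a list \<Rightarrow> nat" where
  "LCF k X Y = Max {l. \<exists>i j. i + l \<le> length X \<and> j + l \<le> length Y \<and>
                        hamming (take l (drop i X)) (take l (drop j Y)) \<le> k}"

definition is_cover :: "nat \<Rightarrow> nat set \<Rightarrow> bool" where
  "is_cover d S \<longleftrightarrow> S \<subseteq> {1..} \<and>
     (\<exists>h :: nat \<Rightarrow> nat \<Rightarrow> nat. \<forall>i j. 1 \<le> i \<longrightarrow> 1 \<le> j \<longrightarrow>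
        h i j < d \<and> i + h i j \<in> S \<and> j + h i j \<in> S)"

definition Pairs :: "nat set \<Rightarrow> 'a list \<Rightarrow> ('a list \<times> 'a list) set" where
  "Pairs S U = {(rev (take (i - 1) U), drop (i - 1) U) | i. i \<in> S \<and> 1 \<le> i \<and> i \<le> length U}"

definition maxPairLCP :: "('b list \<times> 'b list) set \<Rightarrow> ('b list \<times> 'b list) set \<Rightarrow> nat" where
  "maxPairLCP P Q = Sup {lcp P1 Q1 + lcp P2 Q2 | P1 P2 Q1 Q2. (P1, P2) \<in> P \<and> (Q1, Q2) \<in> Q}"

definition is_dpair :: "nat \<Rightarrow> 'a list \<Rightarrow> 'a list \<Rightarrow> 'a option list \<Rightarrow> 'a option list \<Rightarrow> bool" where
  "is_dpair d U V U' V' \<longleftrightarrow> length U' = length U \<and> length V' = length V \<and>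
     (\<forall>i. (i < length U \<longrightarrow> (i \<ge> lcp_d d U V \<or> (i < length V \<and> U ! i = V ! i)) \<longrightarrow>
               U' ! i = Some (U ! i)) \<and>
          (i < length V \<longrightarrow> (i \<ge> lcp_d d U V \<or> (i < length U \<and> U ! i = V ! i)) \<longrightarrow>
               V' ! i = Some (V ! i)) \<and>
          ((i < lcp_d d U V \<and> U ! i \<noteq> V ! i) \<longrightarrow>
               U' ! i = V' ! i \<and> U' ! i \<in> {Some (U ! i), Some (V ! i), None}))"

definition k_complete :: "nat \<Rightarrow> 'a list set \<Rightarrow> ('a list \<Rightarrow> 'a option list set) \<Rightarrow> bool" where
  "k_complete k F N \<longleftrightarrow> (\<forall>U\<in>F. \<forall>V\<in>F. \<forall>d\<le>k. \<exists>U' V'.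
       is_dpair d U V U' V' \<and> U' \<in> N U \<and> V' \<in> N V)"

definition count_dollar :: "'a option list \<Rightarrow> nat" where
  "count_dollar W = length (filter (\<lambda>c. c = None) W)"

definition N_d :: "('a list \<Rightarrow> 'a option list set) \<Rightarrow> nat \<Rightarrow> 'a list \<Rightarrow> 'a option list set" where
  "N_d N d F = {F' \<in> N F. length F' = length F \<and> hamming (map Some F) F' \<le> d}"

definition N_dd :: "('a list \<Rightarrow> 'a option list set) \<Rightarrow> nat \<Rightarrow> real \<Rightarrow> 'a list \<Rightarrow> 'a option list set" where
  "N_dd N d d' F = {F' \<in> N_d N d F.
      real (hamming (map Some F) F') - real (count_dollar F') / 2 \<le> d'}"

definition half_int :: "real \<Rightarrow> bool" where
  "half_int x \<longleftrightarrow> (\<exists>z::int. x = real_of_int z / 2)"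

definition PairsK :: "nat set \<Rightarrow> ('a list \<Rightarrow> 'a option list set) \<Rightarrow> nat \<Rightarrow> real \<Rightarrow> 'a list
     \<Rightarrow> ('a option list \<times> 'a option list) set" where
  "PairsK S N k k' U = (\<Union>(U1, U2) \<in> Pairs S U.
     {(U1', U2') | U1' U2'. \<exists>(d1::nat) (d2::nat) (d1'::real) (d2'::real).
        d1 + d2 = k \<and> d1' + d2' = k' \<and> half_int d1' \<and> half_int d2' \<and>
        0 \<le> d1' \<and> d1' \<le> real d1 \<and> 0 \<le> d2' \<and> d2' \<le> real d2 \<and>
        U1' \<in> N_dd N d1 d1' U1 \<and> U2' \<in> N_dd N d2 d2' U2})"

definition pair_family :: "nat set \<Rightarrow> 'a list \<Rightarrow> 'a list \<Rightarrow> 'a list set" where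
  "pair_family S X Y = {F. \<exists>P \<in> Pairs S X \<union> Pairs S Y. F = fst P \<or> F = snd P}"

end

theory Submission imports Defs begin

text \<open>
  Weigh a neighbour F' of F by d_H(F,F') - #$(F')/2, i.e. a wrong letter costs 1 and a dollar 1/2.
  If two neighbours share a common prefix, every mismatch of the underlying strings inside that
  prefix is paid for by the two sides together, so a pair of neighbours of combined weight at most
  k witnesses an alignment of a factor of X with a factor of Y with at most k mismatches; this
  bounds every maxPairLCP value by LCF_k(X,Y).  Conversely, an optimal alignment of length
  L >= l is cut by the cover at a shift g < l that is an anchor in both strings, and
  k-completeness supplies (U,V)_d-pairs for the two halves whose common prefixes cover the
  alignment.  In a (U,V)_d-pair a mismatch is resolved either by a letter, costing 1 on one side,
  or by a dollar, costing 1/2 on both, so the weights k1 of the X-side and k2 of the Y-side are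
  half-integers adding up to at most k.
\<close>

lemma real_card_lessThan_filter:
  fixes n :: nat
  shows "real (card {i. i < n \<and> P i}) = (\<Sum>i<n. if P i then 1 else 0)"
proof -
  have "(\<Sum>i<n. if P i then 1 else 0) = (\<Sum>i\<in>{i \<in> {..<n}. P i}. 1::real)"
    by (rule sum.inter_filter[symmetric]) simp
  also have "{i \<in> {..<n}. P i} = {i. i < n \<and> P i}" by auto
  finally show ?thesis by simp
qed

lemma hamming_eq_sum:
  "real (hamming xs ys) = (\<Sum>i<min (length xs) (length ys). if xs ! i \<noteq> ys ! i then 1 else 0)"
  unfolding hamming_def using real_card_lessThan_filter[of "min (length xs) (length ys)"]
  by simp

lemma hamming_take_eq_sum:
  assumes "p \<le> length U" "p \<le> length V"
  shows "real (hamming (take p U) (take p V)) = (\<Sum>i<p. if U ! i \<noteq> V ! i then 1 else 0)"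
  using assms by (simp add: hamming_eq_sum min_def)

lemma hamming_commute: "hamming xs ys = hamming ys xs"
  unfolding hamming_def by (rule arg_cong[where f = card]) auto

lemma hamming_Nil [simp]: "hamming [] ys = 0"
  by (simp add: hamming_def)

lemma hamming_Cons_Cons [simp]:
  "hamming (x # xs) (y # ys) = (if x \<noteq> y then 1 else 0) + hamming xs ys"
proof -
  have "real (hamming (x # xs) (y # ys))
      = (\<Sum>i<Suc (min (length xs) (length ys)). if (x # xs) ! i \<noteq> (y # ys) ! i then 1 else 0)"
    by (simp add: hamming_eq_sum)
  also have "\<dots> = (if x \<noteq> y then 1 else 0) + real (hamming xs ys)"
    by (subst sum.lessThan_Suc_shift) (simp add: hamming_eq_sum del: sum.lessThan_Suc)
  finally have "real (hamming (x # xs) (y # ys)) = real ((if x \<noteq> y then 1 else 0) + hamming xs ys)"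
    by simp
  then show ?thesis by (simp only: of_nat_eq_iff)
qed

lemma hamming_append:
  "length xs = length ys \<Longrightarrow> hamming (xs @ xs') (ys @ ys') = hamming xs ys + hamming xs' ys'"
  by (induction xs ys rule: list_induct2) auto

lemma hamming_rev: "length xs = length ys \<Longrightarrow> hamming (rev xs) (rev ys) = hamming xs ys"
  by (induction xs ys rule: list_induct2) (auto simp: hamming_append)

lemma hamming_factor_split:
  assumes "p1 \<le> m" "m \<le> length X" "p1 \<le> m'" "m' \<le> length Y"
  shows "hamming (take (p1 + p2) (drop (m - p1) X)) (take (p1 + p2) (drop (m' - p1) Y))
       = hamming (take p1 (rev (take m X))) (take p1 (rev (take m' Y)))
         + hamming (take p2 (drop m X)) (take p2 (drop m' Y))"
proof -
  have X: "take (p1 + p2) (drop (m - p1) X) = take p1 (drop (m - p1) X) @ take p2 (drop m X)"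
    and Y: "take (p1 + p2) (drop (m' - p1) Y) = take p1 (drop (m' - p1) Y) @ take p2 (drop m' Y)"
    using assms by (simp_all add: take_add)
  have "length (take p1 (drop (m - p1) X)) = length (take p1 (drop (m' - p1) Y))"
    using assms by simp
  then show ?thesis
    unfolding X Y using assms by (simp add: hamming_append take_rev drop_take min_def hamming_rev)
qed

text \<open>The cost of writing x at a position of F carrying the letter u, so that
  d_H(F,F') - #$(F')/2 is the sum of the costs over all positions.\<close>
definition letter_cost :: "'a \<Rightarrow> 'a option \<Rightarrow> real" where
  "letter_cost u x = (if x = Some u then 0 else if x = None then 1/2 else 1)"

definition weight :: "'a list \<Rightarrow> 'a option list \<Rightarrow> real" where
  "weight U U' = real (hamming (map Some U) U') - real (count_dollar U') / 2"

lemma letter_cost_nonneg: "letter_cost u x \<ge> 0"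
  by (simp add: letter_cost_def)

lemma mismatch_le_letter_cost: "(if u \<noteq> v then 1 else 0) \<le> letter_cost u x + letter_cost v x"
  by (simp add: letter_cost_def)

text \<open>Resolving a mismatch by a dollar charges 1/2 to each side, by a letter 1 to one side.\<close>
lemma letter_cost_resolved:
  "x \<in> {Some u, Some v, None} \<Longrightarrow> u \<noteq> v \<Longrightarrow> letter_cost u x + letter_cost v x \<le> 1"
  by (auto simp: letter_cost_def)

lemma weight_eq_sum:
  assumes "length U' = length U"
  shows "weight U U' = (\<Sum>i<length U. letter_cost (U ! i) (U' ! i))"
proof -
  have "real (hamming (map Some U) U') = (\<Sum>i<length U. if Some (U ! i) \<noteq> U' ! i then 1 else 0)"
    using hamming_eq_sum[of "map Some U" U'] assms by simp
  moreover have "real (count_dollar U') = (\<Sum>i<length U. if U' ! i = None then 1 else 0)"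
    unfolding count_dollar_def length_filter_conv_card using real_card_lessThan_filter assms by simp
  ultimately have "weight U U' = (\<Sum>i<length U.
      (if Some (U ! i) \<noteq> U' ! i then 1 else 0) - (if U' ! i = None then 1 else 0) / 2)"
    unfolding weight_def by (simp add: sum_subtractf sum_divide_distrib)
  also have "\<dots> = (\<Sum>i<length U. letter_cost (U ! i) (U' ! i))"
    by (rule sum.cong) (auto simp: letter_cost_def)
  finally show ?thesis .
qed

lemma weight_nonneg: "length U' = length U \<Longrightarrow> weight U U' \<ge> 0"
  by (simp add: weight_eq_sum sum_nonneg letter_cost_nonneg)

lemma half_int_of_nat: "half_int (real n)"
  unfolding half_int_def by (rule exI[of _ "2 * int n"]) simp

lemma half_int_add: "half_int x \<Longrightarrow> half_int y \<Longrightarrow> half_int (x + y)"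
  unfolding half_int_def by (metis add_divide_distrib of_int_add)

lemma half_int_diff: "half_int x \<Longrightarrow> half_int y \<Longrightarrow> half_int (x - y)"
  unfolding half_int_def by (metis diff_divide_distrib of_int_diff)

lemma half_int_weight: "half_int (weight U U')"
  unfolding half_int_def weight_def
  by (rule exI[of _ "2 * int (hamming (map Some U) U') - int (count_dollar U')"]) (simp add: field_simps)

lemma N_dd_weight: "P \<in> N_dd N d d' U \<Longrightarrow> length P = length U \<and> weight U P \<le> d'"
  unfolding N_dd_def N_d_def weight_def by auto

lemma lcp_le_length_left: "lcp xs ys \<le> length xs"
  by (induction xs ys rule: lcp.induct) auto

lemma lcp_le_length_right: "lcp xs ys \<le> length ys"
  by (induction xs ys rule: lcp.induct) auto

lemma nth_eq_if_less_lcp: "i < lcp xs ys \<Longrightarrow> xs ! i = ys ! i"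
  by (induction xs ys arbitrary: i rule: lcp.induct) (auto split: if_splits simp: nth_Cons')

lemma lcp_greatest:
  "(\<And>i. i < p \<Longrightarrow> i < length xs \<and> i < length ys \<and> xs ! i = ys ! i) \<Longrightarrow> p \<le> lcp xs ys"
proof (induction xs ys arbitrary: p rule: lcp.induct)
  case (1 x xs y ys)
  show ?case
  proof (cases p)
    case (Suc q)
    have "x = y" using "1.prems"[of 0] Suc by simp
    moreover have "q \<le> lcp xs ys"
    proof (rule "1.IH")
      fix i assume "i < q"
      then show "i < length xs \<and> i < length ys \<and> xs ! i = ys ! i"
        using "1.prems"[of "Suc i"] Suc by simp
    qed fact
    ultimately show ?thesis using Suc by simp
  qed simp
qed (fastforce simp: less_Suc_eq_0_disj)+

lemma hamming_take_lcp_le_weight: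
  assumes "length U' = length U" "length V' = length V"
  shows "real (hamming (take (lcp U' V') U) (take (lcp U' V') V)) \<le> weight U U' + weight V V'"
proof -
  let ?p = "lcp U' V'"
  have p: "?p \<le> length U" "?p \<le> length V"
    using lcp_le_length_left[of U' V'] lcp_le_length_right[of U' V'] assms by auto
  have "real (hamming (take ?p U) (take ?p V)) = (\<Sum>i<?p. if U ! i \<noteq> V ! i then 1 else 0)"
    using hamming_take_eq_sum p by blast
  also have "\<dots> \<le> (\<Sum>i<?p. letter_cost (U ! i) (U' ! i) + letter_cost (V ! i) (V' ! i))"
    by (rule sum_mono) (metis lessThan_iff mismatch_le_letter_cost nth_eq_if_less_lcp)
  also have "\<dots> \<le> (\<Sum>i<length U. letter_cost (U ! i) (U' ! i)) + (\<Sum>i<length V. letter_cost (V ! i) (V' ! i))"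
    unfolding sum.distrib by (intro add_mono sum_mono2) (use p in \<open>auto simp: letter_cost_nonneg\<close>)
  also have "\<dots> = weight U U' + weight V V'"
    using assms by (simp add: weight_eq_sum)
  finally show ?thesis .
qed

lemma finite_lcp_d_candidates:
  "finite {p. p \<le> min (length U) (length V) \<and> hamming (take p U) (take p V) \<le> d}"
  by (rule finite_subset[of _ "{..min (length U) (length V)}"]) auto

lemma lcp_d_attained:
  "lcp_d d U V \<le> length U \<and> lcp_d d U V \<le> length V \<and>
   hamming (take (lcp_d d U V) U) (take (lcp_d d U V) V) \<le> d"
proof -
  have "0 \<in> {p. p \<le> min (length U) (length V) \<and> hamming (take p U) (take p V) \<le> d}"
    by simp
  then have "lcp_d d U V \<in> {p. p \<le> min (length U) (length V) \<and> hamming (take p U) (take p V) \<le> d}"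
    unfolding lcp_d_def by (intro Max_in finite_lcp_d_candidates) auto
  then show ?thesis by simp
qed

lemma lcp_d_greatest:
  "p \<le> length U \<Longrightarrow> p \<le> length V \<Longrightarrow> hamming (take p U) (take p V) \<le> d \<Longrightarrow> p \<le> lcp_d d U V"
  unfolding lcp_d_def by (rule Max_ge[OF finite_lcp_d_candidates]) simp

lemma lcp_d_commute: "lcp_d d U V = lcp_d d V U"
  unfolding lcp_d_def by (simp add: hamming_commute min.commute)

lemma is_dpair_commute: "is_dpair d U V U' V' \<Longrightarrow> is_dpair d V U V' U'"
  unfolding is_dpair_def lcp_d_commute[of d V U] by auto

lemma length_dpair: "is_dpair d U V U' V' \<Longrightarrow> length U' = length U \<and> length V' = length V"
  unfolding is_dpair_def by blast

lemma nth_dpair_agree: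
  "is_dpair d U V U' V' \<Longrightarrow> i < length U \<Longrightarrow> lcp_d d U V \<le> i \<or> i < length V \<and> U ! i = V ! i
   \<Longrightarrow> U' ! i = Some (U ! i)"
  unfolding is_dpair_def by blast

lemma nth_dpair_mismatch:
  "is_dpair d U V U' V' \<Longrightarrow> i < lcp_d d U V \<Longrightarrow> U ! i \<noteq> V ! i
   \<Longrightarrow> U' ! i = V' ! i \<and> U' ! i \<in> {Some (U ! i), Some (V ! i), None}"
  unfolding is_dpair_def by blast

lemma lcp_d_le_lcp_dpair:
  assumes "is_dpair d U V U' V'"
  shows "lcp_d d U V \<le> lcp U' V'"
proof (rule lcp_greatest)
  fix i assume i: "i < lcp_d d U V"
  then have "i < length U" "i < length V"
    using lcp_d_attained[of d U V] by auto
  moreover have "U' ! i = V' ! i"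
    using nth_dpair_agree[OF assms] nth_dpair_agree[OF is_dpair_commute[OF assms]]
      nth_dpair_mismatch[OF assms] i calculation lcp_d_commute[of d V U]
    by (cases "U ! i = V ! i") auto
  ultimately show "i < length U' \<and> i < length V' \<and> U' ! i = V' ! i"
    using length_dpair[OF assms] by simp
qed

lemma hamming_dpair_le:
  assumes "is_dpair d U V U' V'"
  shows "hamming (map Some U) U' \<le> d"
proof -
  let ?q = "lcp_d d U V"
  have q: "?q \<le> length U" "?q \<le> length V" "hamming (take ?q U) (take ?q V) \<le> d"
    using lcp_d_attained[of d U V] by auto
  have "{i. i < length (map Some U) \<and> i < length U' \<and> map Some U ! i \<noteq> U' ! i}
      \<subseteq> {i. i < length (take ?q U) \<and> i < length (take ?q V) \<and> take ?q U ! i \<noteq> take ?q V ! i}"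
    using nth_dpair_agree[OF assms] q by fastforce
  then have "hamming (map Some U) U' \<le> hamming (take ?q U) (take ?q V)"
    unfolding hamming_def by (rule card_mono[rotated]) simp
  with q show ?thesis by linarith
qed

lemma weight_dpair_le:
  assumes "is_dpair d U V U' V'"
  shows "weight U U' + weight V V' \<le> real d"
proof -
  let ?q = "lcp_d d U V"
  have q: "?q \<le> length U" "?q \<le> length V" "hamming (take ?q U) (take ?q V) \<le> d"
    using lcp_d_attained[of d U V] by auto
  note agree_U = nth_dpair_agree[OF assms]
  note agree_V = nth_dpair_agree[OF is_dpair_commute[OF assms], unfolded lcp_d_commute[of d V U]]
  have "\<forall>i\<in>{..<length U} - {..<?q}. letter_cost (U ! i) (U' ! i) = 0"
    "\<forall>i\<in>{..<length V} - {..<?q}. letter_cost (V ! i) (V' ! i) = 0"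
    using agree_U agree_V by (auto simp: letter_cost_def)
  from this[THEN sum.mono_neutral_right[rotated 2]] q
  have "weight U U' + weight V V'
      = (\<Sum>i<?q. letter_cost (U ! i) (U' ! i)) + (\<Sum>i<?q. letter_cost (V ! i) (V' ! i))"
    using length_dpair[OF assms] by (simp add: weight_eq_sum)
  also have "\<dots> \<le> (\<Sum>i<?q. if U ! i \<noteq> V ! i then 1 else 0)"
    unfolding sum.distrib[symmetric]
  proof (rule sum_mono)
    fix i assume "i \<in> {..<?q}"
    with q have i: "i < ?q" "i < length U" "i < length V" by auto
    show "letter_cost (U ! i) (U' ! i) + letter_cost (V ! i) (V' ! i) \<le> (if U ! i \<noteq> V ! i then 1 else 0)"
    proof (cases "U ! i = V ! i")
      case True
      then show ?thesis using agree_U agree_V i by (simp add: letter_cost_def)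
    next
      case False
      then have "U' ! i = V' ! i" "U' ! i \<in> {Some (U ! i), Some (V ! i), None}"
        using nth_dpair_mismatch[OF assms i(1)] by blast+
      then show ?thesis using letter_cost_resolved[OF _ False, of "U' ! i"] False by simp
    qed
  qed
  also have "\<dots> = real (hamming (take ?q U) (take ?q V))"
    using hamming_take_eq_sum q by metis
  also have "\<dots> \<le> real d" using q by simp
  finally show ?thesis .
qed

lemma dpair_in_N_dd:
  assumes "is_dpair d U V U' V'" "U' \<in> N U" "V' \<in> N V"
  shows "U' \<in> N_dd N d (weight U U') U" "V' \<in> N_dd N d (real d - weight U U') V"
  using assms length_dpair[OF assms(1)] weight_dpair_le[OF assms(1)]
    hamming_dpair_le[OF assms(1)] hamming_dpair_le[OF is_dpair_commute[OF assms(1)]]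
  by (simp_all add: N_dd_def N_d_def weight_def)

lemma Pairs_memI:
  "1 \<le> a \<Longrightarrow> a \<le> length X \<Longrightarrow> a \<in> S \<Longrightarrow> (rev (take (a - 1) X), drop (a - 1) X) \<in> Pairs S X"
  unfolding Pairs_def by blast

lemma PairsK_memI:
  assumes "(U1, U2) \<in> Pairs S U" "d1 + d2 = k" "half_int d1'" "half_int d2'"
    "0 \<le> d1'" "d1' \<le> real d1" "0 \<le> d2'" "d2' \<le> real d2"
    "U1' \<in> N_dd N d1 d1' U1" "U2' \<in> N_dd N d2 d2' U2"
  shows "(U1', U2') \<in> PairsK S N k (d1' + d2') U"
  unfolding PairsK_def using assms by fastforce

lemma PairsK_memE:
  assumes "(P1, P2) \<in> PairsK S N k k' X"
  obtains a d1 d2 d1' d2' where "1 \<le> a" "a \<le> length X" "d1' + d2' = k'"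
    "P1 \<in> N_dd N d1 d1' (rev (take (a - 1) X))" "P2 \<in> N_dd N d2 d2' (drop (a - 1) X)"
  using assms unfolding PairsK_def Pairs_def by fastforce

text \<open>The weights of the neighbours of X form the budget k1, the unused remainder k2.\<close>
lemma dpairs_in_PairsK:
  assumes F: "k_complete k F N" "U1 \<in> F" "U2 \<in> F" "V1 \<in> F" "V2 \<in> F"
    and pairs: "(U1, U2) \<in> Pairs S X" "(V1, V2) \<in> Pairs S Y"
    and d: "d1 + d2 = k"
  obtains k1 k2 P1 P2 Q1 Q2 where "half_int k1" "half_int k2" "0 \<le> k1" "0 \<le> k2"
    "k1 + k2 = real k" "(P1, P2) \<in> PairsK S N k k1 X" "(Q1, Q2) \<in> PairsK S N k k2 Y"
    "lcp_d d1 U1 V1 + lcp_d d2 U2 V2 \<le> lcp P1 Q1 + lcp P2 Q2"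
proof -
  obtain P1 Q1 where D1: "is_dpair d1 U1 V1 P1 Q1" "P1 \<in> N U1" "Q1 \<in> N V1"
    using F d unfolding k_complete_def by (metis le_add1)
  obtain P2 Q2 where D2: "is_dpair d2 U2 V2 P2 Q2" "P2 \<in> N U2" "Q2 \<in> N V2"
    using F d unfolding k_complete_def by (metis le_add2)
  define w1 where "w1 = weight U1 P1"
  define w2 where "w2 = weight U2 P2"
  have w1: "0 \<le> w1" "0 \<le> real d1 - w1" "w1 \<le> real d1"
    using weight_nonneg length_dpair[OF D1(1)] weight_dpair_le[OF D1(1)] unfolding w1_def
    by (smt (verit))+
  have w2: "0 \<le> w2" "0 \<le> real d2 - w2" "w2 \<le> real d2"
    using weight_nonneg length_dpair[OF D2(1)] weight_dpair_le[OF D2(1)] unfolding w2_def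
    by (smt (verit))+
  have half: "half_int w1" "half_int w2" "half_int (real d1 - w1)" "half_int (real d2 - w2)"
    unfolding w1_def w2_def by (intro half_int_diff half_int_of_nat half_int_weight)+
  have "(P1, P2) \<in> PairsK S N k (w1 + w2) X"
    using pairs(1) d half w1 w2 dpair_in_N_dd(1)[OF D1] dpair_in_N_dd(1)[OF D2]
    unfolding w1_def w2_def by (intro PairsK_memI) auto
  moreover have "(Q1, Q2) \<in> PairsK S N k ((real d1 - w1) + (real d2 - w2)) Y"
    using pairs(2) d half w1 w2 dpair_in_N_dd(2)[OF D1] dpair_in_N_dd(2)[OF D2]
    unfolding w1_def w2_def by (intro PairsK_memI) auto
  moreover have "(w1 + w2) + ((real d1 - w1) + (real d2 - w2)) = real k"
    using d by (simp flip: of_nat_add)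
  moreover have "lcp_d d1 U1 V1 + lcp_d d2 U2 V2 \<le> lcp P1 Q1 + lcp P2 Q2"
    using lcp_d_le_lcp_dpair[OF D1(1)] lcp_d_le_lcp_dpair[OF D2(1)] by simp
  ultimately show ?thesis
    using that half w1 w2 by (meson add_nonneg_nonneg half_int_add)
qed

lemma finite_LCF_candidates:
  "finite {l. \<exists>i j. i + l \<le> length X \<and> j + l \<le> length Y \<and>
                 hamming (take l (drop i X)) (take l (drop j Y)) \<le> k}"
  by (rule finite_subset[of _ "{..length X}"]) auto

lemma LCF_greatest:
  "i + l \<le> length X \<Longrightarrow> j + l \<le> length Y \<Longrightarrow>
   hamming (take l (drop i X)) (take l (drop j Y)) \<le> k \<Longrightarrow> l \<le> LCF k X Y"
  unfolding LCF_def by (rule Max_ge[OF finite_LCF_candidates]) blast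

lemma LCF_attained:
  obtains i j where "i + LCF k X Y \<le> length X" "j + LCF k X Y \<le> length Y"
    "hamming (take (LCF k X Y) (drop i X)) (take (LCF k X Y) (drop j Y)) \<le> k"
proof -
  have "0 \<in> {l. \<exists>i j. i + l \<le> length X \<and> j + l \<le> length Y \<and>
                 hamming (take l (drop i X)) (take l (drop j Y)) \<le> k}"
    by auto
  then have "LCF k X Y \<in> {l. \<exists>i j. i + l \<le> length X \<and> j + l \<le> length Y \<and>
                 hamming (take l (drop i X)) (take l (drop j Y)) \<le> k}"
    unfolding LCF_def by (intro Max_in finite_LCF_candidates) blast
  with that show ?thesis by blast
qed

lemma lcp_PairsK_le_LCF:
  assumes "k1 + k2 = real k" "(P1, P2) \<in> PairsK S N k k1 X" "(Q1, Q2) \<in> PairsK S N k k2 Y"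
  shows "lcp P1 Q1 + lcp P2 Q2 \<le> LCF k X Y"
proof -
  obtain a d1 d2 d1' d2' where a: "1 \<le> a" "a \<le> length X" "d1' + d2' = k1"
    and P1: "P1 \<in> N_dd N d1 d1' (rev (take (a - 1) X))"
    and P2: "P2 \<in> N_dd N d2 d2' (drop (a - 1) X)"
    using assms(2) by (rule PairsK_memE)
  obtain b e1 e2 e1' e2' where b: "1 \<le> b" "b \<le> length Y" "e1' + e2' = k2"
    and Q1: "Q1 \<in> N_dd N e1 e1' (rev (take (b - 1) Y))"
    and Q2: "Q2 \<in> N_dd N e2 e2' (drop (b - 1) Y)"
    using assms(3) by (rule PairsK_memE)
  define p1 where "p1 = lcp P1 Q1"
  define p2 where "p2 = lcp P2 Q2"
  note P1 = N_dd_weight[OF P1] and P2 = N_dd_weight[OF P2]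
    and Q1 = N_dd_weight[OF Q1] and Q2 = N_dd_weight[OF Q2]
  have p1: "p1 \<le> a - 1" "p1 \<le> b - 1"
    using lcp_le_length_left[of P1 Q1] lcp_le_length_right[of P1 Q1] P1 Q1 a b
    unfolding p1_def by auto
  have p2: "a - 1 + p2 \<le> length X" "b - 1 + p2 \<le> length Y"
    using lcp_le_length_left[of P2 Q2] lcp_le_length_right[of P2 Q2] P2 Q2 a b
    unfolding p2_def by auto
  have c1: "real (hamming (take p1 (rev (take (a - 1) X))) (take p1 (rev (take (b - 1) Y))))
      \<le> weight (rev (take (a - 1) X)) P1 + weight (rev (take (b - 1) Y)) Q1"
    unfolding p1_def using P1 Q1 by (intro hamming_take_lcp_le_weight) simp_all
  have c2: "real (hamming (take p2 (drop (a - 1) X)) (take p2 (drop (b - 1) Y)))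
      \<le> weight (drop (a - 1) X) P2 + weight (drop (b - 1) Y) Q2"
    unfolding p2_def using P2 Q2 by (intro hamming_take_lcp_le_weight) simp_all
  have "a - 1 \<le> length X" "b - 1 \<le> length Y" using a b by simp_all
  then have "hamming (take (p1 + p2) (drop (a - 1 - p1) X)) (take (p1 + p2) (drop (b - 1 - p1) Y))
      = hamming (take p1 (rev (take (a - 1) X))) (take p1 (rev (take (b - 1) Y)))
        + hamming (take p2 (drop (a - 1) X)) (take p2 (drop (b - 1) Y))"
    using p1 by (intro hamming_factor_split)
  also have "\<dots> \<le> k"
    using c1 c2 P1 P2 Q1 Q2 a(3) b(3) assms(1) by linarith
  finally have "p1 + p2 \<le> LCF k X Y"
    using p1 p2 by (intro LCF_greatest) auto
  then show ?thesis unfolding p1_def p2_def .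
qed

lemma Sup_nat_le: "(\<And>x. x \<in> A \<Longrightarrow> x \<le> n) \<Longrightarrow> Sup A \<le> (n :: nat)"
  by (cases "A = {}") (auto intro: cSup_least)

lemma maxPairLCP_PairsK_le_LCF:
  "k1 + k2 = real k \<Longrightarrow> maxPairLCP (PairsK S N k k1 X) (PairsK S N k k2 Y) \<le> LCF k X Y"
  unfolding maxPairLCP_def by (rule Sup_nat_le) (auto intro: lcp_PairsK_le_LCF)

lemma LCF_le_lcp_PairsK:
  assumes cover: "is_cover l S" and complete: "k_complete k (pair_family S X Y) N"
    and long: "l \<le> LCF k X Y"
  obtains k1 k2 P1 P2 Q1 Q2 where "half_int k1" "half_int k2" "0 \<le> k1" "0 \<le> k2"
    "k1 + k2 = real k" "(P1, P2) \<in> PairsK S N k k1 X" "(Q1, Q2) \<in> PairsK S N k k2 Y"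
    "LCF k X Y \<le> lcp P1 Q1 + lcp P2 Q2"
proof -
  let ?L = "LCF k X Y"
  obtain i j where ij: "i + ?L \<le> length X" "j + ?L \<le> length Y"
    "hamming (take ?L (drop i X)) (take ?L (drop j Y)) \<le> k"
    by (rule LCF_attained)
  obtain g where g: "g < l" "i + 1 + g \<in> S" "j + 1 + g \<in> S"
    using cover unfolding is_cover_def by (metis le_add2)
  define U1 U2 V1 V2 where "U1 = rev (take (i + g) X)" "U2 = drop (i + g) X"
    "V1 = rev (take (j + g) Y)" "V2 = drop (j + g) Y"
  have pairs: "(U1, U2) \<in> Pairs S X" "(V1, V2) \<in> Pairs S Y"
    using Pairs_memI[of "i + 1 + g" X S] Pairs_memI[of "j + 1 + g" Y S] g long ij
    unfolding U1_U2_V1_V2_def by auto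
  then have family: "U1 \<in> pair_family S X Y" "U2 \<in> pair_family S X Y"
    "V1 \<in> pair_family S X Y" "V2 \<in> pair_family S X Y"
    unfolding pair_family_def by force+
  define e1 e2 where "e1 = hamming (take g U1) (take g V1)"
    "e2 = hamming (take (?L - g) U2) (take (?L - g) V2)"
  have "hamming (take (g + (?L - g)) (drop (i + g - g) X)) (take (g + (?L - g)) (drop (j + g - g) Y))
      = e1 + e2"
    unfolding e1_e2_def U1_U2_V1_V2_def using ij g long by (intro hamming_factor_split) auto
  with ij g long have e: "e1 + e2 \<le> k" by simp
  have "g \<le> lcp_d e1 U1 V1" "?L - g \<le> lcp_d (k - e1) U2 V2"
    using ij e g long unfolding e1_e2_def U1_U2_V1_V2_def by (auto intro!: lcp_d_greatest)
  moreover have "e1 + (k - e1) = k" using e by simp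
  then obtain k1 k2 P1 P2 Q1 Q2 where "half_int k1" "half_int k2" "0 \<le> k1" "0 \<le> k2"
    "k1 + k2 = real k" "(P1, P2) \<in> PairsK S N k k1 X" "(Q1, Q2) \<in> PairsK S N k k2 Y"
    "lcp_d e1 U1 V1 + lcp_d (k - e1) U2 V2 \<le> lcp P1 Q1 + lcp P2 Q2"
    by (rule dpairs_in_PairsK[OF complete family pairs])
  ultimately show ?thesis using that g long by fastforce
qed

theorem corollary11:
  fixes X Y :: "'a list" and k l :: nat and S :: "nat set"
    and N :: "'a list \<Rightarrow> 'a option list set"
  assumes "l \<ge> 1"
    and "is_cover l S"
    and "k_complete k (pair_family S X Y) N"
    and "LCF k X Y \<ge> l"
  shows "LCF k X Y = Sup {maxPairLCP (PairsK S N k k1 X) (PairsK S N k k2 Y) | k1 k2.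
            half_int k1 \<and> half_int k2 \<and> 0 \<le> k1 \<and> 0 \<le> k2 \<and> k1 + k2 = real k}"
  \<comment> \<open>The hypothesis l \<ge> 1 is implied by is_cover l S, whose shifts satisfy h i j < l.\<close>
proof -
  obtain k1 k2 P1 P2 Q1 Q2 where k: "half_int k1" "half_int k2" "0 \<le> k1" "0 \<le> k2"
    "k1 + k2 = real k" and P: "(P1, P2) \<in> PairsK S N k k1 X" and Q: "(Q1, Q2) \<in> PairsK S N k k2 Y"
    and lower: "LCF k X Y \<le> lcp P1 Q1 + lcp P2 Q2"
    using LCF_le_lcp_PairsK[OF assms(2-4)] .
  have "lcp P1 Q1 + lcp P2 Q2 \<le> maxPairLCP (PairsK S N k k1 X) (PairsK S N k k2 Y)"
    unfolding maxPairLCP_def using P Q lcp_PairsK_le_LCF[OF k(5)]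
    by (intro cSup_upper bdd_aboveI) blast+
  with lower maxPairLCP_PairsK_le_LCF[OF k(5), of S N X Y]
  have "LCF k X Y = maxPairLCP (PairsK S N k k1 X) (PairsK S N k k2 Y)" by linarith
  then show ?thesis
    using k maxPairLCP_PairsK_le_LCF by (intro cSup_eq_maximum[symmetric]) blast+
qed

end
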